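(* Let $I=(\mathcal{M},[N],(u_i)_{i\in[N]})$ be a non-negative instance with $\mathcal{M}\ne\emptyset$ and let $(S_1,\ldots,S_N)$ be the allocation produced by the round-robin greedy protocol for $I$. Then for all $i\in[N]$, $$u_i(S_i)\le\Big(2-\frac1N\Big)\cdot mMS_{u_i}^N(\mathcal{M}).$$ Moreover the constant $2-\frac1N$ cannot be improved: for every $N\ge1$ there is a non-negative instance with $N$ agents for which the protocol yields an agent $i$ with $u_i(S_i)=\big(2-\frac1N\big)\,mMS_{u_i}^N(\mathcal{M})>0$.
   Context: A non-negative instance: finite item set $\mathcal{M}$, agents $[N]=\{1,\dots,N\}$, additive utilities $u_i$ with $u_i(j)\ge0$. $\Pi_N(\mathcal{M})$ is the set of ordered $N$-partitions of $\mathcal{M}$ (parts may be empty); $mMS_{u}^N(\mathcal{M}):=\min_{(T_1,\ldots,T_N)\in\Pi_N(\mathcal{M})}\max_{j} u(T_j)$. The round-robin greedy protocol: agents pick in the fixed order $1,2,\dots,N,1,2,\dots$; at her turn agent $i$ receives an item of lowest utility $u_i$ among the unallocated items (ties broken arbitrarily), until all items are allocated; $S_i$ is the set agent $i$ receives. *)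

theory Defs
  imports Complex_Main
begin

(* Agents are 1..N. The k-th pick (0-indexed) is made by agent (k mod N) + 1. *)
definition rr_agent :: "nat \<Rightarrow> nat \<Rightarrow> nat" where
  "rr_agent N k = k mod N + 1"

(* xs is a possible run of the round-robin greedy protocol: the items in pick order,
   each item picked having lowest utility for the picking agent among the
   still unallocated items (arbitrary tie-breaking), until all of M is allocated. *)
definition rr_greedy_run :: "nat \<Rightarrow> 'a set \<Rightarrow> (nat \<Rightarrow> 'a \<Rightarrow> real) \<Rightarrow> 'a list \<Rightarrow> bool" where
  "rr_greedy_run N M u xs \<longleftrightarrow>
     distinct xs \<and> set xs = M \<and>
     (\<forall>k < length xs. \<forall>y \<in> M - set (take k xs).
        u (rr_agent N k) (xs ! k) \<le> u (rr_agent N k) y)"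

definition rr_bundle :: "nat \<Rightarrow> 'a list \<Rightarrow> nat \<Rightarrow> 'a set" where
  "rr_bundle N xs i = {xs ! k | k. k < length xs \<and> rr_agent N k = i}"

definition is_ordered_partition :: "nat \<Rightarrow> 'a set \<Rightarrow> (nat \<Rightarrow> 'a set) \<Rightarrow> bool" where
  "is_ordered_partition N M T \<longleftrightarrow>
     (\<Union>j\<in>{1..N}. T j) = M \<and>
     (\<forall>j\<in>{1..N}. \<forall>l\<in>{1..N}. j \<noteq> l \<longrightarrow> T j \<inter> T l = {})"

definition mMS :: "nat \<Rightarrow> ('a \<Rightarrow> real) \<Rightarrow> 'a set \<Rightarrow> real" where
  "mMS N v M = Min {Max ((\<lambda>j. sum v (T j)) ` {1..N}) | T. is_ordered_partition N M T}"

end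

theory Submission
  imports Defs "HOL-Library.FuncSet"
begin

text \<open>Let \<open>B = mMS_{u_i}^N(M)\<close>. Averaging over the parts of an optimal partition gives
\<open>u_i(M) \<le> N B\<close>, and every single item has value at most \<open>B\<close>. Agent \<open>i\<close> picks at the
positions \<open>c, c + N, c + 2N, \<dots>\<close> of the run, and by greediness each of her picks is worth
at most every item picked at or after it. Hence \<open>N\<close> times one of her picks is bounded by
the \<open>N\<close> items picked from that position on, and for her last pick, after which fewer
than \<open>N\<close> items may remain, by that item plus \<open>(N - 1) B\<close>. These blocks are disjoint, so
\<open>N u_i(S_i) \<le> u_i(M) + (N - 1) B \<le> (2N - 1) B\<close>.

For tightness take \<open>N(N - 1)\<close> items of value \<open>1\<close> followed by one item of value \<open>N\<close>: picking
them in order is greedy, agent \<open>1\<close> gets \<open>N - 1\<close> unit items and the big one, and cutting the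
items into blocks of \<open>N\<close> consecutive ones shows \<open>mMS = N\<close>.\<close>

lemma ordered_partition_sum:
  assumes T: "is_ordered_partition N M T" and fin: "finite M"
  shows "sum v M = (\<Sum>j\<in>{1..N}. sum v (T j))"
proof -
  have U: "(\<Union>j\<in>{1..N}. T j) = M"
    and D: "\<And>j l. j \<in> {1..N} \<Longrightarrow> l \<in> {1..N} \<Longrightarrow> j \<noteq> l \<Longrightarrow> T j \<inter> T l = {}"
    using T unfolding is_ordered_partition_def by auto
  have "\<And>j. j \<in> {1..N} \<Longrightarrow> finite (T j)"
    using U fin by (metis UN_upper finite_subset)
  then show ?thesis
    unfolding U[symmetric] using D by (intro sum.UNION_disjoint) auto
qed

lemma finite_mMS_candidates:
  assumes "finite M"
  shows "finite {Max ((\<lambda>j. sum v (T j)) ` {1..N}) | T. is_ordered_partition N M T}"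
proof -
  let ?g = "\<lambda>T. Max ((\<lambda>j. sum v (T j)) ` {1..N})"
  have "{?g T | T. is_ordered_partition N M T} \<subseteq> ?g ` (PiE {1..N} (\<lambda>_. Pow M))"
  proof clarify
    fix T assume T: "is_ordered_partition N M T"
    have "?g T = ?g (restrict T {1..N})"
      by (intro arg_cong[where f = Max] image_cong) auto
    moreover have "restrict T {1..N} \<in> PiE {1..N} (\<lambda>_. Pow M)"
      using T unfolding is_ordered_partition_def by auto
    ultimately show "?g T \<in> ?g ` (PiE {1..N} (\<lambda>_. Pow M))" by blast
  qed
  moreover have "finite (PiE {1..N} (\<lambda>_. Pow M))" using assms by (intro finite_PiE) auto
  ultimately show ?thesis by (meson finite_imageI finite_subset)
qed

lemma is_ordered_partition_trivial:
  "1 \<le> N \<Longrightarrow> is_ordered_partition N M (\<lambda>j. if j = 1 then M else {})"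
  unfolding is_ordered_partition_def by auto

lemma mMS_le:
  assumes "finite M" "is_ordered_partition N M T"
  shows "mMS N v M \<le> Max ((\<lambda>j. sum v (T j)) ` {1..N})"
  unfolding mMS_def using finite_mMS_candidates[OF assms(1)] assms(2)
  by (intro Min_le) auto

lemma mMS_greatest:
  assumes "finite M" "1 \<le> N"
    and "\<And>T. is_ordered_partition N M T \<Longrightarrow> L \<le> Max ((\<lambda>j. sum v (T j)) ` {1..N})"
  shows "L \<le> mMS N v M"
  unfolding mMS_def
  using finite_mMS_candidates[OF assms(1)] is_ordered_partition_trivial[OF assms(2)] assms(3)
  by (subst Min_ge_iff) auto

lemma sum_le_mMS:
  assumes fin: "finite M" and N: "1 \<le> N"
  shows "sum v M \<le> real N * mMS N v M"
proof -
  have "sum v M / real N \<le> mMS N v M"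
  proof (rule mMS_greatest[OF fin N])
    fix T assume T: "is_ordered_partition N M T"
    have "sum v M = (\<Sum>j\<in>{1..N}. sum v (T j))" by (rule ordered_partition_sum[OF T fin])
    also have "\<dots> \<le> (\<Sum>j\<in>{1..N}. Max ((\<lambda>j. sum v (T j)) ` {1..N}))"
      by (intro sum_mono Max_ge) auto
    finally show "sum v M / real N \<le> Max ((\<lambda>j. sum v (T j)) ` {1..N})"
      using N by (simp add: divide_le_eq mult.commute)
  qed
  then show ?thesis using N by (simp add: divide_le_eq mult.commute)
qed

lemma item_le_mMS:
  assumes fin: "finite M" and N: "1 \<le> N"
    and nonneg: "\<And>y. y \<in> M \<Longrightarrow> 0 \<le> v y" and x: "x \<in> M"
  shows "v x \<le> mMS N v M"
proof (rule mMS_greatest[OF fin N])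
  fix T assume T: "is_ordered_partition N M T"
  then obtain j where j: "j \<in> {1..N}" "x \<in> T j"
    using x unfolding is_ordered_partition_def by blast
  have "T j \<subseteq> M" using T j(1) unfolding is_ordered_partition_def by blast
  then have "v x \<le> sum v (T j)"
    using j(2) fin nonneg by (intro member_le_sum) (auto intro: finite_subset)
  also have "\<dots> \<le> Max ((\<lambda>j. sum v (T j)) ` {1..N})" using j(1) by (intro Max_ge) auto
  finally show "v x \<le> Max ((\<lambda>j. sum v (T j)) ` {1..N})" .
qed

lemma add_le_of_mod_eq:
  fixes a k N :: nat
  assumes "a mod N = k mod N" "a < k"
  shows "a + N \<le> k"
proof -
  have "N dvd k - a" using assms mod_eq_dvd_iff_nat[of a k N] by simp
  then have "N \<le> k - a" using assms(2) by (simp add: dvd_imp_le)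
  then show ?thesis using assms(2) by linarith
qed

lemma sum_residue_class_le:
  fixes f :: "nat \<Rightarrow> real"
  assumes N: "0 < N"
    and mono: "\<And>k k'. k mod N = c \<Longrightarrow> k \<le> k' \<Longrightarrow> k' < m \<Longrightarrow> f k \<le> f k'"
    and nonneg: "\<And>k. k < m \<Longrightarrow> 0 \<le> f k"
    and bound: "\<And>k. k < m \<Longrightarrow> f k \<le> B" and B: "0 \<le> B"
    and a: "a mod N = c"
  shows "real N * sum f {k. a \<le> k \<and> k < m \<and> k mod N = c} \<le> sum f {a..<m} + (real N - 1) * B"
  using a
proof (induction "m - a" arbitrary: a rule: less_induct)
  case less
  show ?case
  proof (cases "a < m")
    case False
    then have "{k. a \<le> k \<and> k < m \<and> k mod N = c} = {}" "{a..<m} = {}" by auto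
    then show ?thesis using B N by (simp only: sum.empty) simp
  next
    case True
    let ?rest = "{k. a + N \<le> k \<and> k < m \<and> k mod N = c}"
    have "{k. a \<le> k \<and> k < m \<and> k mod N = c} = insert a ?rest"
      using less.prems True add_le_of_mod_eq[of a N] by (auto simp: le_less) metis
    then have "real N * sum f {k. a \<le> k \<and> k < m \<and> k mod N = c} = real N * f a + real N * sum f ?rest"
      using N by (simp add: distrib_left)
    also have "\<dots> \<le> sum f {a..<m} + (real N - 1) * B"
    proof (cases "a + N \<le> m")
      case True
      have "real N * f a \<le> sum f {a..<a + N}"
        using sum_bounded_below[of "{a..<a + N}" "f a" f] mono[OF less.prems] True by auto
      moreover have "real N * sum f ?rest \<le> sum f {a + N..<m} + (real N - 1) * B"
        using less.hyps[of "a + N"] less.prems N \<open>a < m\<close> True by simp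
      moreover have "sum f {a..<m} = sum f {a..<a + N} + sum f {a + N..<m}"
        using True by (simp add: sum.atLeastLessThan_concat)
      ultimately show ?thesis by linarith
    next
      case False
      then have "?rest = {}" by auto
      then have "sum f ?rest = 0" by (simp only: sum.empty)
      moreover have "f a \<le> sum f {a..<m}"
        using nonneg \<open>a < m\<close> by (intro member_le_sum) auto
      moreover have "(real N - 1) * f a \<le> (real N - 1) * B"
        using bound \<open>a < m\<close> N by (intro mult_left_mono) auto
      ultimately show ?thesis by (simp add: algebra_simps)
    qed
    finally show ?thesis .
  qed
qed

lemma rr_bundle_sum:
  assumes "distinct xs" "1 \<le> i"
  shows "sum v (rr_bundle N xs i) = (\<Sum>k | k < length xs \<and> k mod N = i - 1. v (xs ! k))"
proof -
  have "rr_bundle N xs i = (!) xs ` {k. k < length xs \<and> k mod N = i - 1}"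
    using assms(2) unfolding rr_bundle_def rr_agent_def by auto
  then show ?thesis
    using assms(1) by (simp add: sum.reindex inj_on_nth)
qed

lemma rr_greedy_run_pick_le:
  assumes run: "rr_greedy_run N M u xs" and "k \<le> k'" "k' < length xs"
  shows "u (rr_agent N k) (xs ! k) \<le> u (rr_agent N k) (xs ! k')"
proof -
  have "xs ! k' = drop k xs ! (k' - k)" using assms(2,3) by simp
  then have "xs ! k' \<in> set (drop k xs)"
    using assms(2,3) by (metis nth_mem length_drop diff_less_mono)
  then have "xs ! k' \<notin> set (take k xs)"
    using run set_take_disj_set_drop_if_distinct[of xs k k] unfolding rr_greedy_run_def by auto
  moreover have "xs ! k' \<in> M" using run assms(3) unfolding rr_greedy_run_def by auto
  ultimately show ?thesis using run assms unfolding rr_greedy_run_def by auto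
qed

lemma rr_greedy_bundle_le:
  fixes u :: "nat \<Rightarrow> 'a \<Rightarrow> real"
  assumes N: "1 \<le> N" and fin: "finite M" and ne: "M \<noteq> {}"
    and run: "rr_greedy_run N M u xs" and i: "i \<in> {1..N}"
    and nonneg: "\<And>y. y \<in> M \<Longrightarrow> 0 \<le> u i y"
  shows "sum (u i) (rr_bundle N xs i) \<le> (2 - 1 / real N) * mMS N (u i) M"
proof -
  define m where "m = length xs"
  define c where "c = i - 1"
  define f where "f k = u i (xs ! k)" for k
  define B where "B = mMS N (u i) M"
  have dist: "distinct xs" and set_xs: "set xs = M"
    using run unfolding rr_greedy_run_def by auto
  have item: "xs ! k \<in> M" if "k < m" for k
    using that set_xs unfolding m_def by auto
  have mono: "f k \<le> f k'" if "k mod N = c" "k \<le> k'" "k' < m" for k k'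
  proof -
    have "rr_agent N k = i" using that(1) i unfolding rr_agent_def c_def by auto
    then show ?thesis
      using rr_greedy_run_pick_le[OF run that(2)] that(3) unfolding f_def m_def by simp
  qed
  have f_nonneg: "0 \<le> f k" if "k < m" for k
    using nonneg item[OF that] unfolding f_def .
  have f_le_B: "f k \<le> B" if "k < m" for k
    using item_le_mMS[OF fin N nonneg item[OF that]] unfolding f_def B_def .
  have "0 < m" using ne set_xs unfolding m_def by auto
  then have B_nonneg: "0 \<le> B" using f_nonneg f_le_B by fastforce
  have "sum (u i) (rr_bundle N xs i) = sum f {k. k < m \<and> k mod N = c}"
    using rr_bundle_sum[OF dist, of i] i unfolding f_def m_def c_def by simp
  also have "{k. k < m \<and> k mod N = c} = {k. c \<le> k \<and> k < m \<and> k mod N = c}"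
    by auto
  finally have "real N * sum (u i) (rr_bundle N xs i)
      = real N * sum f {k. c \<le> k \<and> k < m \<and> k mod N = c}" by simp
  also have "\<dots> \<le> sum f {c..<m} + (real N - 1) * B"
    using N c_def i by (intro sum_residue_class_le mono f_nonneg f_le_B B_nonneg) auto
  also have "sum f {c..<m} \<le> sum f {..<m}"
    using f_nonneg by (intro sum_mono2) auto
  also have "sum f {..<m} = sum (u i) M"
    unfolding f_def m_def set_xs[symmetric] using dist
    by (simp add: sum.distinct_set_conv_list sum_list_sum_nth atLeast0LessThan)
  also have "sum (u i) M \<le> real N * B"
    unfolding B_def by (rule sum_le_mMS[OF fin N])
  also have "real N * B + (real N - 1) * B = real N * ((2 - 1 / real N) * B)"
    using N by (simp add: algebra_simps)
  finally show ?thesis unfolding B_def using N by simp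
qed

lemma rr_greedy_run_upt:
  assumes "\<And>i j j'. j \<le> j' \<Longrightarrow> j' < n \<Longrightarrow> u i j \<le> u i j'"
  shows "rr_greedy_run N {..<n} u [0..<n]"
  unfolding rr_greedy_run_def using assms by (auto simp: take_upt)

lemma is_ordered_partition_div_blocks:
  assumes "M \<subseteq> {..<N * N}"
  shows "is_ordered_partition N M (\<lambda>j. {k \<in> M. k div N = j - 1})"
  unfolding is_ordered_partition_def
proof (intro conjI ballI impI)
  show "(\<Union>j\<in>{1..N}. {k \<in> M. k div N = j - 1}) = M"
  proof (intro equalityI subsetI)
    fix k assume "k \<in> M"
    moreover have "k div N < N" using \<open>k \<in> M\<close> assms by (auto intro: less_mult_imp_div_less)
    ultimately show "k \<in> (\<Union>j\<in>{1..N}. {k \<in> M. k div N = j - 1})"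
      by (intro UN_I[of "k div N + 1"]) auto
  qed auto
qed auto

lemma card_div_block_le:
  fixes N a :: nat
  assumes "0 < N"
  shows "card {k \<in> A. k div N = a} \<le> N"
proof -
  have "{k \<in> A. k div N = a} \<subseteq> {a * N..<a * N + N}"
    using dividend_less_div_times[OF assms] by (auto simp: add.commute)
  then show ?thesis
    by (metis card_atLeastLessThan card_mono finite_atLeastLessThan add_diff_cancel_left')
qed

lemma card_multiples_below:
  fixes N q :: nat
  assumes "0 < N"
  shows "card {k. k < N * q \<and> k mod N = 0} = q"
proof -
  have "{k. k < N * q \<and> k mod N = 0} = (\<lambda>t. t * N) ` {..<q}"
    using assms by (auto simp: mult.commute)
  then show ?thesis using assms by (simp add: card_image inj_on_def)
qed

lemma rr_greedy_tight_instance: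
  assumes N: "1 \<le> N"
  shows "\<exists>(M::nat set) (u::nat \<Rightarrow> nat \<Rightarrow> real) xs i.
           finite M \<and> (\<forall>i\<in>{1..N}. \<forall>j\<in>M. u i j \<ge> 0) \<and>
           rr_greedy_run N M u xs \<and> i \<in> {1..N} \<and>
           sum (u i) (rr_bundle N xs i) = (2 - 1 / real N) * mMS N (u i) M \<and>
           mMS N (u i) M > 0"
proof -
  define L where "L = N * (N - 1)"
  define M where "M = {..<Suc L}"
  define v where "v j = (if j = L then real N else 1)" for j :: nat
  define xs where "xs = [0..<Suc L]"
  have fin: "finite M" unfolding M_def by simp
  have run: "rr_greedy_run N M (\<lambda>_. v) xs"
    unfolding M_def xs_def using N by (intro rr_greedy_run_upt) (auto simp: v_def)
  have "distinct xs" unfolding xs_def by simp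
  then have "sum v (rr_bundle N xs 1) = (\<Sum>k | k < length xs \<and> k mod N = 0. v (xs ! k))"
    using rr_bundle_sum[of xs 1 v N] by simp
  also have "\<dots> = (\<Sum>k | k < Suc L \<and> k mod N = 0. v k)"
    unfolding xs_def by (intro sum.cong) (simp_all del: upt_Suc)
  also have "{k. k < Suc L \<and> k mod N = 0} = insert L {k. k < N * (N - 1) \<and> k mod N = 0}"
    unfolding L_def by auto
  also have "sum v \<dots> = real N + real (N - 1)"
    using card_multiples_below[of N "N - 1"] N by (simp add: v_def L_def)
  finally have bundle_sum: "sum v (rr_bundle N xs 1) = 2 * real N - 1"
    using N by (simp add: of_nat_diff)
  have block_le: "sum v {k \<in> M. k div N = a} \<le> real N" for a
  proof (cases "L \<in> {k \<in> M. k div N = a}")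
    case True
    have "k = L" if "k \<in> M" "k div N = a" for k
    proof -
      have "L div N * N \<le> k" using that True div_times_less_eq_dividend[of k N] by simp
      moreover have "L div N * N = L" unfolding L_def using N by simp
      ultimately show ?thesis using that(1) unfolding M_def by simp
    qed
    with True have "{k \<in> M. k div N = a} = {L}" by blast
    then show ?thesis by (simp add: v_def)
  next
    case False
    then have "sum v {k \<in> M. k div N = a} = real (card {k \<in> M. k div N = a})"
      by (subst sum.cong[where h = "\<lambda>_. 1"]) (auto simp: v_def)
    also have "\<dots> \<le> real N" using card_div_block_le[of N M a] N by simp
    finally show ?thesis .
  qed
  have mMS_eq: "mMS N v M = real N"
  proof (rule antisym)
    have "M \<subseteq> {..<N * N}" unfolding M_def L_def using N by (cases N) auto
    then have "mMS N v M \<le> Max ((\<lambda>j. sum v {k \<in> M. k div N = j - 1}) ` {1..N})"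
      by (intro mMS_le fin is_ordered_partition_div_blocks)
    also have "\<dots> \<le> real N" using N block_le by (subst Max_le_iff) auto
    finally show "mMS N v M \<le> real N" .
    show "real N \<le> mMS N v M"
      using item_le_mMS[OF fin N, of v L] by (simp add: v_def M_def)
  qed
  have "(2 - 1 / real N) * mMS N v M = 2 * real N - 1"
    unfolding mMS_eq using N by (simp add: left_diff_distrib)
  moreover have "0 \<le> v j" for j by (simp add: v_def)
  ultimately show ?thesis
    using fin run bundle_sum N mMS_eq
    by (intro exI[of _ M] exI[of _ "\<lambda>_. v"] exI[of _ xs] exI[of _ 1]) auto
qed

theorem proposition6:
  shows "(\<forall>(N::nat) (M::'a set) (u::nat \<Rightarrow> 'a \<Rightarrow> real) xs.
            N \<ge> 1 \<and> finite M \<and> M \<noteq> {} \<and> (\<forall>i\<in>{1..N}. \<forall>j\<in>M. u i j \<ge> 0) \<and>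
            rr_greedy_run N M u xs \<longrightarrow>
            (\<forall>i\<in>{1..N}. sum (u i) (rr_bundle N xs i) \<le> (2 - 1 / real N) * mMS N (u i) M))
       \<and> (\<forall>N::nat. N \<ge> 1 \<longrightarrow>
            (\<exists>(M::nat set) (u::nat \<Rightarrow> nat \<Rightarrow> real) xs i.
               finite M \<and> (\<forall>i\<in>{1..N}. \<forall>j\<in>M. u i j \<ge> 0) \<and>
               rr_greedy_run N M u xs \<and> i \<in> {1..N} \<and>
               sum (u i) (rr_bundle N xs i) = (2 - 1 / real N) * mMS N (u i) M \<and>
               mMS N (u i) M > 0))"
proof (intro conjI allI impI ballI)
  fix N M xs i and u :: "nat \<Rightarrow> 'a \<Rightarrow> real"
  assume "N \<ge> 1 \<and> finite M \<and> M \<noteq> {} \<and> (\<forall>i\<in>{1..N}. \<forall>j\<in>M. u i j \<ge> 0) \<and> rr_greedy_run N M u xs"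
    and "i \<in> {1..N}"
  then show "sum (u i) (rr_bundle N xs i) \<le> (2 - 1 / real N) * mMS N (u i) M"
    by (intro rr_greedy_bundle_le) auto
qed (rule rr_greedy_tight_instance)

end
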